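(* Let $(G',\sigma,G)$ be a left (resp. right) valid triplet, where $\sigma:\mathcal{A}^*\to\mathcal{B}^*$ is a return morphism. For every spanning tree $T'$ of $G'$, there exists a spanning tree $T$ of $G$ such that $(T',\sigma,T)$ is left (resp. right) valid, where spanning trees are regarded as colored trees (each edge having its own color).
   Context: A return morphism for $w\in\mathcal{B}^+$ is an injective non-erasing morphism $\sigma:\mathcal{A}^*\to\mathcal{B}^*$ such that $\sigma(a)w$ contains exactly two occurrences of $w$, a proper prefix and a proper suffix, for each $a\in\mathcal{A}$ ($w$ of maximal length if unspecified). $\mathcal{A}^L_{\sigma,s}=\{a:\sigma(a)\in\mathcal{B}^+s\}$, $\mathcal{A}^R_{\sigma,p}=\{a:\sigma(a)w\in p\mathcal{B}^+\}$; $\varphi^L_{\sigma,s}(a)$ for $a\in\mathcal{A}^L_{\sigma,s}$ is the letter $a'$ with $\sigma(a)\in\mathcal{B}^*a's$; $\varphi^R_{\sigma,p}(b)$ for $b\in\mathcal{A}^R_{\sigma,p}$ is the letter $b'$ with $\sigma(b)w\in pb'\mathcal{B}^*$; $\mathcal{T}^L(\sigma)$ is the set of longest common suffixes of $\sigma(a),\sigma(b)$, $a\ne b$, and $\mathcal{T}^R(\sigma)$ the set of longest common prefixes of $\sigma(a)w,\sigma(b)w$, $a\ne b$. Multi-clique $G(\{C_1,\dots,C_k\})$ on a vertex set $V$: every pair of distinct elements of $C_i$ joined by an edge of color $c_i$, colors distinct; colored multigraphs identified up to a bijection of colors. Acyclic for the coloring: each simple cycle is monochromatic. A colored tree is a multi-clique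 all of whose edges have different colors and whose underlying graph is a tree. For a multigraph $G$ on $\mathcal{A}$, $G^L_{\sigma,s}$ (resp. $G^R_{\sigma,p}$) is its subgraph induced by $\mathcal{A}^L_{\sigma,s}$ (resp. $\mathcal{A}^R_{\sigma,p}$). For $G=G(\{C_1,\dots,C_k\})$ on $\mathcal{A}$: $\sigma^L(G)=G(\{\varphi^L_{\sigma,s}(C_i):i\le k,s\in\mathcal{T}^L(\sigma)\})$, $\sigma^R(G)=G(\{\varphi^R_{\sigma,p}(C_i):i\le k,p\in\mathcal{T}^R(\sigma)\})$ on vertex set $\mathcal{B}$. A triplet $(G',\sigma,G)$ is left valid (resp. right valid) if (1) $G$ is a multi-clique acyclic for the coloring and connected; (2) for all $s\in\mathcal{T}^L(\sigma)$, $G^L_{\sigma,s}$ is connected (resp. for all $p\in\mathcal{T}^R(\sigma)$, $G^R_{\sigma,p}$ is connected); (3) $G'=\sigma^L(G)$ (resp. $G'=\sigma^R(G)$) is a multi-clique acyclic for the coloring and connected. *)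

theory Defs
  imports Main "HOL-Library.Multiset" "HOL-Library.Sublist"
begin

definition morph :: "('a \<Rightarrow> 'b list) \<Rightarrow> 'a list \<Rightarrow> 'b list" where
  "morph \<sigma> u = concat (map \<sigma> u)"

definition occurrences :: "'b list \<Rightarrow> 'b list \<Rightarrow> nat set" where
  "occurrences u w = {i. \<exists>p s. u = p @ w @ s \<and> length p = i}"

definition return_morphism ::
  "'a set \<Rightarrow> 'b set \<Rightarrow> ('a \<Rightarrow> 'b list) \<Rightarrow> 'b list \<Rightarrow> bool" where
  "return_morphism A B \<sigma> w \<longleftrightarrow>
     w \<noteq> [] \<and> set w \<subseteq> B \<and>
     (\<forall>a\<in>A. set (\<sigma> a) \<subseteq> B) \<and>
     (\<forall>a\<in>A. \<sigma> a \<noteq> []) \<and>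
     inj_on (morph \<sigma>) (lists A) \<and>
     (\<forall>a\<in>A. occurrences (\<sigma> a @ w) w = {0, length (\<sigma> a)})"

definition longest_common_suffix :: "'b list \<Rightarrow> 'b list \<Rightarrow> 'b list" where
  "longest_common_suffix u v = rev (longest_common_prefix (rev u) (rev v))"

definition AL :: "'a set \<Rightarrow> ('a \<Rightarrow> 'b list) \<Rightarrow> 'b list \<Rightarrow> 'a set" where
  "AL A \<sigma> s = {a\<in>A. \<exists>u. u \<noteq> [] \<and> \<sigma> a = u @ s}"

definition AR :: "'a set \<Rightarrow> ('a \<Rightarrow> 'b list) \<Rightarrow> 'b list \<Rightarrow> 'b list \<Rightarrow> 'a set" where
  "AR A \<sigma> w p = {a\<in>A. \<exists>u. u \<noteq> [] \<and> \<sigma> a @ w = p @ u}"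

(* phi^L_{sigma,s}(a): the letter a' with sigma(a) in B^* a' s *)
definition phiL :: "('a \<Rightarrow> 'b list) \<Rightarrow> 'b list \<Rightarrow> 'a \<Rightarrow> 'b" where
  "phiL \<sigma> s a = \<sigma> a ! (length (\<sigma> a) - length s - 1)"

(* phi^R_{sigma,p}(b): the letter b' with sigma(b) w in p b' B^* *)
definition phiR :: "('a \<Rightarrow> 'b list) \<Rightarrow> 'b list \<Rightarrow> 'b list \<Rightarrow> 'a \<Rightarrow> 'b" where
  "phiR \<sigma> w p b = (\<sigma> b @ w) ! length p"

definition TL :: "'a set \<Rightarrow> ('a \<Rightarrow> 'b list) \<Rightarrow> 'b list set" where
  "TL A \<sigma> = {longest_common_suffix (\<sigma> a) (\<sigma> b) | a b. a \<in> A \<and> b \<in> A \<and> a \<noteq> b}"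

definition TR :: "'a set \<Rightarrow> ('a \<Rightarrow> 'b list) \<Rightarrow> 'b list \<Rightarrow> 'b list set" where
  "TR A \<sigma> w = {longest_common_prefix (\<sigma> a @ w) (\<sigma> b @ w) | a b. a \<in> A \<and> b \<in> A \<and> a \<noteq> b}"

(* A multi-clique G({C_1,...,C_k}) is represented by the multiset {#C_1,...,C_k#};
   each element occurrence is one colour (colours are distinct), and the multiset
   representation identifies colourings up to a bijection of colours. *)

definition multi_clique_on :: "'v set \<Rightarrow> 'v set multiset \<Rightarrow> bool" where
  "multi_clique_on V G \<longleftrightarrow> (\<forall>C\<in>#G. C \<subseteq> V)"

(* equality of the coloured multigraphs: cliques with fewer than two vertices carry no edge *)
definition mc_eq :: "'v set multiset \<Rightarrow> 'v set multiset \<Rightarrow> bool" where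
  "mc_eq G H \<longleftrightarrow> filter_mset (\<lambda>C. 2 \<le> card C) G = filter_mset (\<lambda>C. 2 \<le> card C) H"

(* with colours = list indices: every simple cycle v_0 ... v_{n-1} (n >= 2, distinct vertices,
   distinct edges, the edge between v_i and v_{i+1 mod n} having colour c i) is monochromatic *)
definition acyclic_list :: "'v set list \<Rightarrow> bool" where
  "acyclic_list xs \<longleftrightarrow>
    (\<forall>(n::nat) (v::nat \<Rightarrow> 'v) (c::nat \<Rightarrow> nat).
       2 \<le> n \<and> inj_on v {..<n} \<and>
       (\<forall>i<n. c i < length xs \<and> v i \<in> xs ! c i \<and> v (Suc i mod n) \<in> xs ! c i) \<and>
       (n = 2 \<longrightarrow> c 0 \<noteq> c 1)
       \<longrightarrow> (\<forall>i<n. c i = c 0))"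

definition acyclic_coloring :: "'v set multiset \<Rightarrow> bool" where
  "acyclic_coloring G \<longleftrightarrow> (\<forall>xs. mset xs = G \<longrightarrow> acyclic_list xs)"

definition mc_connected :: "'v set \<Rightarrow> 'v set multiset \<Rightarrow> bool" where
  "mc_connected V G \<longleftrightarrow>
    (\<forall>u\<in>V. \<forall>v\<in>V. (u, v) \<in> {(x, y). x \<in> V \<and> y \<in> V \<and> (\<exists>C\<in>#G. x \<in> C \<and> y \<in> C)}\<^sup>*)"

definition induced :: "'v set \<Rightarrow> 'v set multiset \<Rightarrow> 'v set multiset" where
  "induced X G = image_mset (\<lambda>C. C \<inter> X) G"

definition colored_tree :: "'v set \<Rightarrow> 'v set multiset \<Rightarrow> bool" where
  "colored_tree V T \<longleftrightarrow>
     (\<forall>C\<in>#T. C \<subseteq> V \<and> card C = 2) \<and> (\<forall>C. count T C \<le> 1) \<and>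
     mc_connected V T \<and> acyclic_coloring T"

definition spanning_tree :: "'v set \<Rightarrow> 'v set multiset \<Rightarrow> 'v set multiset \<Rightarrow> bool" where
  "spanning_tree V G T \<longleftrightarrow> colored_tree V T \<and> (\<forall>e\<in>#T. \<exists>C\<in>#G. e \<subseteq> C)"

definition sigmaL :: "'a set \<Rightarrow> ('a \<Rightarrow> 'b list) \<Rightarrow> 'a set multiset \<Rightarrow> 'b set multiset" where
  "sigmaL A \<sigma> G = (\<Sum>C\<in>#G. image_mset (\<lambda>s. phiL \<sigma> s ` (C \<inter> AL A \<sigma> s)) (mset_set (TL A \<sigma>)))"

definition sigmaR ::
  "'a set \<Rightarrow> ('a \<Rightarrow> 'b list) \<Rightarrow> 'b list \<Rightarrow> 'a set multiset \<Rightarrow> 'b set multiset" where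
  "sigmaR A \<sigma> w G = (\<Sum>C\<in>#G. image_mset (\<lambda>p. phiR \<sigma> w p ` (C \<inter> AR A \<sigma> w p)) (mset_set (TR A \<sigma> w)))"

definition left_valid ::
  "'a set \<Rightarrow> 'b set \<Rightarrow> ('a \<Rightarrow> 'b list) \<Rightarrow> 'b set multiset \<Rightarrow> 'a set multiset \<Rightarrow> bool" where
  "left_valid A B \<sigma> G' G \<longleftrightarrow>
     (multi_clique_on A G \<and> acyclic_coloring G \<and> mc_connected A G) \<and>
     (\<forall>s\<in>TL A \<sigma>. mc_connected (AL A \<sigma> s) (induced (AL A \<sigma> s) G)) \<and>
     (mc_eq G' (sigmaL A \<sigma> G) \<and> multi_clique_on B G' \<and> acyclic_coloring G' \<and> mc_connected B G')"

definition right_valid ::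
  "'a set \<Rightarrow> 'b set \<Rightarrow> ('a \<Rightarrow> 'b list) \<Rightarrow> 'b list \<Rightarrow> 'b set multiset \<Rightarrow> 'a set multiset \<Rightarrow> bool" where
  "right_valid A B \<sigma> w G' G \<longleftrightarrow>
     (multi_clique_on A G \<and> acyclic_coloring G \<and> mc_connected A G) \<and>
     (\<forall>p\<in>TR A \<sigma> w. mc_connected (AR A \<sigma> w p) (induced (AR A \<sigma> w p) G)) \<and>
     (mc_eq G' (sigmaR A \<sigma> w G) \<and> multi_clique_on B G' \<and> acyclic_coloring G' \<and> mc_connected B G')"

end

theory Submission
  imports Defs "HOL-Library.Transitive_Closure_Table"
begin

text \<open>Left and right validity are two instances of one situation: a prefix code \<open>W\<close> on \<open>A\<close>
  (\<open>W a = rev (\<sigma> a)\<close>, resp. \<open>W a = \<sigma> a @ w\<close>; prefix-freeness is where the return property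
  of \<open>w\<close> enters), and \<open>G'\<close> is made of the images of the cliques \<open>C\<close> of \<open>G\<close> at the branch points
  \<open>p\<close> of the code, obtained by reading the letter that follows \<open>p\<close> in the words of \<open>C\<close>.
  Each edge of \<open>T'\<close> lies in such an image, so it is read off a pair \<open>{a, b} \<subseteq> C\<close> whose words
  branch exactly at \<open>p\<close>; these pairs form \<open>T\<close>. A pair contributes exactly one non-trivial
  clique to the image, its own edge, so the image of \<open>T\<close> is \<open>T'\<close>.
  \<open>T\<close> is connected on every set of letters extending \<open>p\<close>, by induction on the depth of \<open>p\<close>:
  a path of \<open>G\<close> at a branch point projects to letters joined in \<open>G'\<close>, hence, by acyclicity of
  \<open>G'\<close>, by a path of \<open>T'\<close> inside a single clique, whose edges lift to \<open>T\<close>. A cycle of \<open>T\<close>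
  would, at its shortest branch point, join the two ends of a \<open>T'\<close>-edge by other \<open>T'\<close>-edges.\<close>

section \<open>Graphs given by multisets of cliques\<close>

definition adj :: "'v set multiset \<Rightarrow> ('v \<times> 'v) set" where
  "adj G = {(x, y). \<exists>C\<in>#G. x \<in> C \<and> y \<in> C}"

lemma mc_connected_iff_adj:
  "mc_connected V G \<longleftrightarrow> (\<forall>u\<in>V. \<forall>v\<in>V. (u, v) \<in> (adj G \<inter> V \<times> V)\<^sup>*)"
proof -
  have "{(x, y). x \<in> V \<and> y \<in> V \<and> (\<exists>C\<in>#G. x \<in> C \<and> y \<in> C)} = adj G \<inter> V \<times> V"
    unfolding adj_def by blast
  then show ?thesis unfolding mc_connected_def by simp
qed

lemma adj_induced: "adj (induced X G) \<inter> X \<times> X = adj G \<inter> X \<times> X"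
  unfolding adj_def induced_def by auto

lemma adj_mono:
  assumes "\<And>C. C \<in># G \<Longrightarrow> \<exists>D\<in>#H. C \<subseteq> D"
  shows "adj G \<subseteq> adj H"
  unfolding adj_def
proof clarify
  fix x y C assume "C \<in># G" "x \<in> C" "y \<in> C"
  moreover obtain D where "D \<in># H" "C \<subseteq> D" using assms \<open>C \<in># G\<close> by blast
  ultimately show "\<exists>D\<in>#H. x \<in> D \<and> y \<in> D" by blast
qed

lemma rtrancl_imp_distinct_path:
  assumes "(u, v) \<in> R\<^sup>*"
  obtains zs where "distinct (u # zs)" "last (u # zs) = v"
    "\<forall>i < length zs. ((u # zs) ! i, zs ! i) \<in> R"
proof -
  have "(\<lambda>x y. (x, y) \<in> R)\<^sup>*\<^sup>* u v" using assms by (simp add: rtrancl_def)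
  then obtain xs where "rtrancl_path (\<lambda>x y. (x, y) \<in> R) u xs v"
    by (auto simp: rtranclp_eq_rtrancl_path)
  then obtain zs where p: "rtrancl_path (\<lambda>x y. (x, y) \<in> R) u zs v" "distinct (u # zs)"
    by (rule rtrancl_path_distinct)
  have "last (u # zs) = v"
    using p(1) by (cases zs) (auto elim: rtrancl_path.cases dest: rtrancl_path_last)
  then show thesis using that p(2) rtrancl_path_nth[OF p(1)] by blast
qed

lemma path_imp_rtrancl:
  assumes "\<forall>i < length zs. ((u # zs) ! i, zs ! i) \<in> R"
  shows "(u, last (u # zs)) \<in> R\<^sup>*"
  using assms
proof (induction zs arbitrary: u)
  case Nil
  then show ?case by simp
next
  case (Cons z zs)
  have "(u, z) \<in> R" using Cons.prems by force
  moreover have "(z, last (z # zs)) \<in> R\<^sup>*"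
    using Cons.prems by (intro Cons.IH) force
  ultimately show ?case by simp
qed

lemma card_2_eq_doubleton:
  assumes "card e = 2" "x \<in> e" "y \<in> e" "x \<noteq> y"
  shows "e = {x, y}"
  using assms by (auto simp: card_2_iff)

lemma two_le_card:
  assumes "finite K" "x \<in> K" "y \<in> K" "x \<noteq> y"
  shows "2 \<le> card K"
  using card_mono[OF assms(1), of "{x, y}"] assms by simp

lemma two_le_card_image_doubleton_iff:
  "2 \<le> card (f ` ({a, b} \<inter> S)) \<longleftrightarrow> a \<in> S \<and> b \<in> S \<and> f a \<noteq> f b"
proof -
  have "card (f ` ({a, b} \<inter> S)) \<le> 1" if "\<not> (a \<in> S \<and> b \<in> S \<and> f a \<noteq> f b)"
  proof -
    from that obtain z where "f ` ({a, b} \<inter> S) \<subseteq> {z}" by blast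
    then show ?thesis using card_mono[of "{z}"] by fastforce
  qed
  then show ?thesis by fastforce
qed

lemma distinct_if_count_le_1:
  assumes "\<And>a. count (mset xs) a \<le> 1"
  shows "distinct xs"
  using assms
proof (induction xs)
  case Nil
  then show ?case by simp
next
  case (Cons x xs)
  have "x \<notin> set xs" using Cons.prems[of x] by simp
  moreover have "distinct xs"
    using Cons.prems by (intro Cons.IH) (metis count_add_mset le_SucI mset.simps(2) not_less_eq_eq)
  ultimately show ?case by simp
qed

lemma mset_set_set_mset_eq:
  assumes "\<And>x. count M x \<le> 1"
  shows "mset_set (set_mset M) = M"
proof (rule multiset_eqI)
  fix x
  show "count (mset_set (set_mset M)) x = count M x"
  proof (cases "x \<in># M")
    case True
    then have "count M x = 1" using assms[of x] by (simp add: antisym Suc_le_eq)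
    then show ?thesis using True by simp
  next
    case False
    then show ?thesis by (simp add: count_eq_zero_iff)
  qed
qed

lemma filter_mset_sum_mset_image:
  "filter_mset P (\<Sum>x\<in>#M. f x) = (\<Sum>x\<in>#M. filter_mset P (f x))"
  by (induction M) auto

lemma two_le_count_sum_image_mset:
  assumes "x1 \<in># M" "x2 \<in># M" "y1 \<in> S" "y2 \<in> S" "y1 \<noteq> y2" "finite S"
    and "f x1 y1 = K" "f x2 y2 = K"
  shows "2 \<le> count (\<Sum>x\<in>#M. image_mset (f x) (mset_set S)) K"
proof -
  have one: "1 \<le> count (image_mset (f x) (mset_set S)) (f x y)" if "y \<in> S" for x y
    using that \<open>finite S\<close> by (simp add: Suc_le_eq)
  obtain M1 where M1: "M = add_mset x1 M1" using multi_member_split[OF assms(1)] by blast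
  show ?thesis
  proof (cases "x2 = x1")
    case True
    have "mset_set S = add_mset y1 (mset_set (S - {y1}))"
      using assms(3,6) by (rule mset_set.remove[rotated])
    also have "mset_set (S - {y1}) = add_mset y2 (mset_set (S - {y1} - {y2}))"
      using assms(3-6) by (intro mset_set.remove) auto
    finally have "mset_set S = add_mset y1 (add_mset y2 (mset_set (S - {y1} - {y2})))" .
    then have "2 \<le> count (image_mset (f x1) (mset_set S)) K"
      using assms(7,8) True by simp
    then show ?thesis using M1 by simp
  next
    case False
    then have "x2 \<in># M1" using assms(2) M1 by simp
    then obtain M2 where "M1 = add_mset x2 M2" by (blast dest: multi_member_split)
    then have "count (\<Sum>x\<in>#M. image_mset (f x) (mset_set S)) K =
        count (image_mset (f x1) (mset_set S)) K + (count (image_mset (f x2) (mset_set S)) K +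
        count (\<Sum>x\<in>#M2. image_mset (f x) (mset_set S)) K)"
      using M1 by simp
    then show ?thesis
      using one[OF assms(3), of x1, unfolded assms(7)] one[OF assms(4), of x2, unfolded assms(8)]
      by linarith
  qed
qed

section \<open>Cycles and acyclic colourings\<close>

lemma add_mod_neq:
  assumes "j < (n::nat)" "0 < m" "m < n"
  shows "(j + m) mod n \<noteq> j"
  using assms by (cases "j + m < n") (auto simp: le_mod_geq)

lemma Suc_mod_neq:
  assumes "2 \<le> (n::nat)" "i < n"
  shows "Suc i mod n \<noteq> i"
  using add_mod_neq[of i n 1] assms by simp

lemma cycle_consecutive_neq:
  assumes "2 \<le> (n::nat)" "inj_on v {..<n}" "i < n"
  shows "v i \<noteq> v (Suc i mod n)"
proof
  assume "v i = v (Suc i mod n)"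
  then have "i = Suc i mod n" using inj_onD[OF assms(2)] assms(3) by simp
  then show False using Suc_mod_neq[OF assms(1,3)] by simp
qed

lemma cycle_edges_distinct:
  assumes "3 \<le> (n::nat)" and inj: "inj_on v {..<n}" and ij: "i < n" "j < n"
    and eq: "{v i, v (Suc i mod n)} = {v j, v (Suc j mod n)}"
  shows "i = j"
proof (rule ccontr)
  assume "i \<noteq> j"
  then have "v i \<noteq> v j" using inj ij by (auto dest: inj_onD)
  then have "v i = v (Suc j mod n)" "v (Suc i mod n) = v j"
    using eq by (auto simp: doubleton_eq_iff)
  then have "i = Suc j mod n" "Suc i mod n = j"
    using inj ij by (auto dest: inj_onD)
  then have "(j + 2) mod n = j" by (simp add: mod_Suc_eq)
  then show False using add_mod_neq[of j n 2] assms(1) ij by simp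
qed

lemma rtrancl_around_cycle:
  assumes j: "j < n"
    and step: "\<And>i. i < n \<Longrightarrow> i \<noteq> j \<Longrightarrow> (y i, y (Suc i mod n)) \<in> R\<^sup>*"
  shows "(y (Suc j mod n), y j) \<in> R\<^sup>*"
proof -
  have "(y (Suc j mod n), y ((j + 1 + k) mod n)) \<in> R\<^sup>*" if "k < n" for k
    using that
  proof (induction k)
    case 0
    then show ?case by simp
  next
    case (Suc k)
    let ?i = "(j + 1 + k) mod n"
    have "?i \<noteq> j" using add_mod_neq[OF j, of "Suc k"] Suc.prems by simp
    then have "(y ?i, y (Suc ?i mod n)) \<in> R\<^sup>*" using step j by simp
    then show ?case using Suc by (simp add: mod_Suc_eq)
  qed
  from this[of "n - 1"] show ?thesis using j by simp
qed

lemma acyclic_listD: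
  assumes "acyclic_list xs" "2 \<le> n" "inj_on v {..<n}"
    "\<forall>i<n. c i < length xs \<and> v i \<in> xs ! c i \<and> v (Suc i mod n) \<in> xs ! c i"
    "n = 2 \<Longrightarrow> c 0 \<noteq> c 1" "i < n"
  shows "c i = c 0"
  using assms unfolding acyclic_list_def by blast

lemma acyclic_coloring_two_common_vertices:
  assumes "acyclic_coloring H" "K \<in># H" "K' \<in># H - {#K#}"
    "x \<noteq> y" "x \<in> K" "y \<in> K" "x \<in> K'" "y \<in> K'"
  shows False
proof -
  obtain ys where ys: "mset ys = H - {#K#}" using ex_mset by blast
  then obtain j where j: "j < length ys" "ys ! j = K'"
    using assms(3) by (metis in_set_conv_nth set_mset_mset)
  define xs where "xs = K # ys"
  have "mset xs = H" using ys assms(2) unfolding xs_def by simp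
  then have "acyclic_list xs" using assms(1) unfolding acyclic_coloring_def by blast
  moreover define v where "v = (\<lambda>k::nat. if k = 0 then x else y)"
  moreover define c where "c = (\<lambda>k::nat. if k = 0 then 0 else Suc j)"
  moreover have "inj_on v {..<2}"
    using assms(4) unfolding v_def inj_on_def by (auto simp: less_2_cases_iff)
  moreover have "\<forall>k<2. c k < length xs \<and> v k \<in> xs ! c k \<and> v (Suc k mod 2) \<in> xs ! c k"
    using assms j unfolding v_def c_def xs_def by (auto simp: less_2_cases_iff)
  ultimately have "c 1 = c 0" by (intro acyclic_listD) (auto simp: c_def)
  then show False unfolding c_def by simp
qed

text \<open>A simple path whose endpoints share a colour closes up to a simple cycle with at least
  three vertices, so in an acyclic colouring all its edges carry that colour.\<close>

lemma acyclic_list_path_monochromatic: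
  assumes ac: "acyclic_list xs" and d: "distinct (u # zs)" and l: "last (u # zs) = v"
    and len: "2 \<le> length zs"
    and cf: "\<forall>i<length zs. cf i < length xs \<and> (u # zs) ! i \<in> xs ! cf i \<and> zs ! i \<in> xs ! cf i"
    and k: "k < length xs" "u \<in> xs ! k" "v \<in> xs ! k"
  shows "\<forall>i<length zs. cf i = k"
proof -
  define n where "n = Suc (length zs)"
  define vv where "vv = (\<lambda>i. (u # zs) ! i)"
  define c where "c = (\<lambda>i. if i < length zs then cf i else k)"
  have inj: "inj_on vv {..<n}"
    using d unfolding vv_def n_def inj_on_def by (simp add: nth_eq_iff_index_eq)
  have vlast: "vv (length zs) = v"
    using l len unfolding vv_def by (cases zs) (auto simp: last_conv_nth)
  have conds: "\<forall>i<n. c i < length xs \<and> vv i \<in> xs ! c i \<and> vv (Suc i mod n) \<in> xs ! c i"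
  proof (intro allI impI)
    fix i assume "i < n"
    then consider "i < length zs" | "i = length zs" unfolding n_def by linarith
    then show "c i < length xs \<and> vv i \<in> xs ! c i \<and> vv (Suc i mod n) \<in> xs ! c i"
    proof cases
      case 1
      then have "Suc i mod n = Suc i" unfolding n_def by simp
      then show ?thesis using cf 1 unfolding c_def vv_def by auto
    next
      case 2
      then have "Suc i mod n = 0" unfolding n_def by simp
      then show ?thesis using k vlast 2 unfolding c_def vv_def by auto
    qed
  qed
  have "c i = c 0" if "i < n" for i
    using ac _ inj conds _ that by (rule acyclic_listD) (use len n_def in auto)
  moreover have "c (length zs) = k" unfolding c_def by simp
  ultimately show ?thesis unfolding c_def n_def by (metis less_SucI lessI)
qed

lemma acyclic_coloring_path_within_clique:
  assumes acyc: "acyclic_coloring H"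
    and edges: "\<And>e. e \<in># T \<Longrightarrow> card e = 2 \<and> (\<exists>D\<in>#H. e \<subseteq> D)"
    and conn: "(u, v) \<in> (adj T)\<^sup>*"
    and K: "K \<in># H" "u \<in> K" "v \<in> K"
  shows "(u, v) \<in> (adj (filter_mset (\<lambda>e. e \<subseteq> K) T))\<^sup>*"
proof -
  obtain zs where path: "distinct (u # zs)" "last (u # zs) = v"
    "\<forall>i < length zs. ((u # zs) ! i, zs ! i) \<in> adj T"
    using rtrancl_imp_distinct_path[OF conn] by blast
  obtain xs where xs: "mset xs = H" using ex_mset by blast
  have "\<exists>e c. e \<in># T \<and> c < length xs \<and> e \<subseteq> xs ! c \<and> (u # zs) ! i \<in> e \<and> zs ! i \<in> e"
    if i: "i < length zs" for i
  proof -
    obtain e where e: "e \<in># T" "(u # zs) ! i \<in> e" "zs ! i \<in> e"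
      using path(3) i unfolding adj_def by blast
    then obtain D where "D \<in># H" "e \<subseteq> D" using edges by blast
    then obtain c where "c < length xs" "xs ! c = D"
      using xs by (metis in_set_conv_nth set_mset_mset)
    then show ?thesis using e \<open>e \<subseteq> D\<close> by blast
  qed
  then obtain e c where ec: "\<And>i. i < length zs \<Longrightarrow>
      e i \<in># T \<and> c i < length xs \<and> e i \<subseteq> xs ! c i \<and> (u # zs) ! i \<in> e i \<and> zs ! i \<in> e i"
    by metis
  have "e i \<subseteq> K" if i: "i < length zs" for i
  proof (cases "2 \<le> length zs")
    case True
    obtain k where k: "k < length xs" "xs ! k = K"
      using xs K(1) by (metis in_set_conv_nth set_mset_mset)
    have "acyclic_list xs" using acyc xs unfolding acyclic_coloring_def by blast
    then have "c i = k"
      using acyclic_list_path_monochromatic[OF _ path(1,2) True _ k(1)] ec i k K(2,3) by blast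
    then show ?thesis using ec[OF i] k by simp
  next
    case False
    then have "length zs = 1" using i by simp
    then have "zs = [v]" using path(2) by (cases zs) auto
    moreover have "u \<noteq> v" using path(1) \<open>zs = [v]\<close> by simp
    ultimately have "e i = {u, v}"
      using ec[OF i] edges i by (intro card_2_eq_doubleton) auto
    then show ?thesis using K by simp
  qed
  then have "\<forall>i < length zs. ((u # zs) ! i, zs ! i) \<in> adj (filter_mset (\<lambda>e. e \<subseteq> K) T)"
    using ec unfolding adj_def by fastforce
  from path_imp_rtrancl[OF this] show ?thesis using path(2) by simp
qed

lemma acyclic_coloring_edge_is_bridge:
  assumes acyc: "acyclic_coloring T" and edges: "\<And>f. f \<in># T \<Longrightarrow> card f = 2"
    and xy: "{x, y} \<in># T" "x \<noteq> y"
  shows "(x, y) \<notin> (adj (filter_mset (\<lambda>f. f \<noteq> {x, y}) T))\<^sup>*"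
proof
  let ?T = "filter_mset (\<lambda>f. f \<noteq> {x, y}) T"
  assume "(x, y) \<in> (adj ?T)\<^sup>*"
  then have "(x, y) \<in> (adj (filter_mset (\<lambda>f. f \<subseteq> {x, y}) ?T))\<^sup>*"
    using edges by (intro acyclic_coloring_path_within_clique[OF acyc _ _ xy(1)]) auto
  moreover have "filter_mset (\<lambda>f. f \<subseteq> {x, y}) ?T = {#}"
  proof -
    have "f = {x, y}" if "f \<in># T" "f \<subseteq> {x, y}" for f
      using that edges[OF that(1)] xy(2) by (intro card_subset_eq) auto
    then show ?thesis by auto
  qed
  ultimately show False using xy(2) by (simp add: adj_def)
qed

lemma acyclic_coloring_if_no_cycles:
  assumes edges: "\<And>E. E \<in># T \<Longrightarrow> card E = 2" and simple: "\<And>E. count T E \<le> 1"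
    and no_cycle: "\<And>n v. 3 \<le> n \<Longrightarrow> inj_on v {..<n} \<Longrightarrow>
      (\<And>i. i < n \<Longrightarrow> {v i, v (Suc i mod n)} \<in># T) \<Longrightarrow> False"
  shows "acyclic_coloring T"
  unfolding acyclic_coloring_def acyclic_list_def
proof (intro allI impI)
  fix xs n and v :: "nat \<Rightarrow> 'a" and c i
  assume xs: "mset xs = T"
    and h: "2 \<le> n \<and> inj_on v {..<n} \<and>
       (\<forall>i<n. c i < length xs \<and> v i \<in> xs ! c i \<and> v (Suc i mod n) \<in> xs ! c i) \<and>
       (n = 2 \<longrightarrow> c 0 \<noteq> c 1)"
    and "i < n"
  have inj: "inj_on v {..<n}" and n2: "2 \<le> n" using h by blast+
  have edge: "xs ! c j \<in># T" "xs ! c j = {v j, v (Suc j mod n)}" if j: "j < n" for j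
  proof -
    have mem: "c j < length xs" "v j \<in> xs ! c j" "v (Suc j mod n) \<in> xs ! c j"
      using h j by blast+
    show inT: "xs ! c j \<in># T" using xs mem(1) by (metis nth_mem set_mset_mset)
    have "v j \<noteq> v (Suc j mod n)" by (rule cycle_consecutive_neq[OF n2 inj j])
    then show "xs ! c j = {v j, v (Suc j mod n)}"
      by (rule card_2_eq_doubleton[OF edges[OF inT] mem(2,3)])
  qed
  show "c i = c 0"
  proof (cases "n = 2")
    case True
    have "distinct xs" using simple xs by (intro distinct_if_count_le_1) simp
    moreover have "xs ! c 0 = xs ! c 1" using edge[of 0] edge[of 1] True by auto
    moreover have "c 0 < length xs" "c 1 < length xs" using h True by auto
    ultimately have "c 0 = c 1" by (simp add: nth_eq_iff_index_eq)
    then show ?thesis using h True by blast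
  next
    case False
    then have "3 \<le> n" using n2 by simp
    moreover have "{v j, v (Suc j mod n)} \<in># T" if "j < n" for j
      using edge[OF that] by simp
    ultimately have False by (rule no_cycle[OF _ inj])
    then show ?thesis ..
  qed
qed

section \<open>Branching of a prefix code\<close>

lemma longest_common_prefix_append:
  "longest_common_prefix (p @ xs) (p @ ys) = p @ longest_common_prefix xs ys"
  by (induction p) auto

lemma longest_common_prefix_commute:
  "longest_common_prefix xs ys = longest_common_prefix ys xs"
  by (induction xs ys rule: longest_common_prefix.induct) auto

lemma prefix_around_cycle:
  assumes j: "j < n" "prefix t (f j)"
    and lcp: "\<And>i. i < n \<Longrightarrow> length t \<le> length (longest_common_prefix (f i) (f (Suc i mod n)))"
    and i: "i < n"
  shows "prefix t (f i)"
proof -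
  have "prefix t (f ((j + k) mod n))" for k
  proof (induction k)
    case 0
    then show ?case using j by simp
  next
    case (Suc k)
    let ?i = "(j + k) mod n"
    have "?i < n" using j by simp
    let ?l = "longest_common_prefix (f ?i) (f (Suc ?i mod n))"
    have "prefix t ?l"
      using prefix_length_prefix[OF Suc.IH longest_common_prefix_prefix1 lcp[OF \<open>?i < n\<close>]] .
    then have "prefix t (f (Suc ?i mod n))"
      using longest_common_prefix_prefix2 prefix_order.trans by blast
    then show ?case by (simp add: mod_Suc_eq)
  qed
  from this[of "n - j + i"] show ?thesis using i j(1) by simp
qed

text \<open>\<open>sigmaL A \<sigma> G\<close> and \<open>sigmaR A \<sigma> w G\<close> are both \<open>letter_cliques A W G\<close>, for
  \<open>W a = rev (\<sigma> a)\<close> (the suffix \<open>s\<close> becoming the branch point \<open>rev s\<close>) and for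
  \<open>W a = \<sigma> a @ w\<close> respectively.\<close>

definition extending :: "'a set \<Rightarrow> ('a \<Rightarrow> 'b list) \<Rightarrow> 'b list \<Rightarrow> 'a set" where
  "extending A W p = {a \<in> A. \<exists>u. u \<noteq> [] \<and> W a = p @ u}"

definition next_letter :: "('a \<Rightarrow> 'b list) \<Rightarrow> 'b list \<Rightarrow> 'a \<Rightarrow> 'b" where
  "next_letter W p a = W a ! length p"

definition branch_points :: "'a set \<Rightarrow> ('a \<Rightarrow> 'b list) \<Rightarrow> 'b list set" where
  "branch_points A W =
     {longest_common_prefix (W a) (W b) | a b. a \<in> A \<and> b \<in> A \<and> a \<noteq> b}"

definition letter_cliques ::
  "'a set \<Rightarrow> ('a \<Rightarrow> 'b list) \<Rightarrow> 'a set multiset \<Rightarrow> 'b set multiset" where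
  "letter_cliques A W G =
     (\<Sum>C\<in>#G. image_mset (\<lambda>p. next_letter W p ` (C \<inter> extending A W p))
                          (mset_set (branch_points A W)))"

definition valid_triplet ::
  "'a set \<Rightarrow> 'b set \<Rightarrow> ('a \<Rightarrow> 'b list) \<Rightarrow> 'b set multiset \<Rightarrow> 'a set multiset \<Rightarrow> bool" where
  "valid_triplet A B W G' G \<longleftrightarrow>
     (multi_clique_on A G \<and> acyclic_coloring G \<and> mc_connected A G) \<and>
     (\<forall>p\<in>branch_points A W. mc_connected (extending A W p) (induced (extending A W p) G)) \<and>
     (mc_eq G' (letter_cliques A W G) \<and> multi_clique_on B G' \<and> acyclic_coloring G' \<and>
      mc_connected B G')"

locale prefix_code =
  fixes A :: "'a set" and W :: "'a \<Rightarrow> 'b list"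
  assumes finite_A: "finite A"
    and nonempty: "\<And>a. a \<in> A \<Longrightarrow> W a \<noteq> []"
    and prefix_free: "\<And>a b. a \<in> A \<Longrightarrow> b \<in> A \<Longrightarrow> prefix (W a) (W b) \<Longrightarrow> a = b"
begin

abbreviation "Ext \<equiv> extending A W"
abbreviation "letter \<equiv> next_letter W"
abbreviation "Br \<equiv> branch_points A W"
abbreviation "lcp a b \<equiv> longest_common_prefix (W a) (W b)"
abbreviation "level_clique C p \<equiv> letter p ` (C \<inter> Ext p)"

lemma extending_subset: "Ext p \<subseteq> A"
  unfolding extending_def by auto

lemma extending_Nil: "Ext [] = A"
  using nonempty unfolding extending_def by auto

lemma extending_append_subset: "Ext (p @ q) \<subseteq> Ext p"
  unfolding extending_def by auto

lemma finite_branch_points: "finite Br"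
proof -
  have "Br \<subseteq> (\<lambda>(a, b). lcp a b) ` (A \<times> A)" unfolding branch_points_def by auto
  then show ?thesis using finite_A finite_subset by blast
qed

lemma finite_level_clique: "finite (level_clique C p)"
  using finite_A extending_subset by (meson finite_Int finite_imageI finite_subset)

lemma extendingE:
  assumes "a \<in> Ext p"
  obtains x r where "W a = p @ x # r" "letter p a = x"
proof -
  obtain u where "u \<noteq> []" "W a = p @ u" using assms unfolding extending_def by auto
  then show thesis using that unfolding next_letter_def by (cases u) auto
qed

lemma length_lt_of_extending: "a \<in> Ext p \<Longrightarrow> length p < length (W a)"
  unfolding extending_def by auto

lemma prefix_extendingI:
  assumes "a \<in> A" "prefix p (W a)" "W a \<noteq> p"
  shows "a \<in> Ext p"
  using assms unfolding extending_def prefix_def by auto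

lemma lcp_iff_branching:
  assumes a: "a \<in> A" and b: "b \<in> A" and "a \<noteq> b"
  shows "a \<in> Ext p \<and> b \<in> Ext p \<and> letter p a \<noteq> letter p b \<longleftrightarrow> p = lcp a b"
proof
  assume "a \<in> Ext p \<and> b \<in> Ext p \<and> letter p a \<noteq> letter p b"
  moreover obtain x r where "W a = p @ x # r" "letter p a = x" using calculation extendingE by blast
  moreover obtain y r' where "W b = p @ y # r'" "letter p b = y" using calculation extendingE by blast
  ultimately show "p = lcp a b" by (simp add: longest_common_prefix_append)
next
  assume p: "p = lcp a b"
  have not_prefix: "W a \<noteq> p" "W b \<noteq> p"
    using p prefix_free[OF a b] prefix_free[OF b a] \<open>a \<noteq> b\<close>
    by (metis longest_common_prefix_prefix1 longest_common_prefix_prefix2)+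
  have ext: "a \<in> Ext p" "b \<in> Ext p"
    using p not_prefix a b longest_common_prefix_prefix1 longest_common_prefix_prefix2
    by (blast intro: prefix_extendingI)+
  obtain x r where x: "W a = p @ x # r" "letter p a = x" using ext(1) extendingE by blast
  obtain y r' where y: "W b = p @ y # r'" "letter p b = y" using ext(2) extendingE by blast
  have "x \<noteq> y"
  proof
    assume "x = y"
    then have "prefix (p @ [x]) (W a)" "prefix (p @ [x]) (W b)" using x y by auto
    then have "prefix (p @ [x]) p" using p longest_common_prefix_max_prefix by metis
    then show False by (metis prefix_length_le length_append_singleton not_less_eq_eq order_refl)
  qed
  then show "a \<in> Ext p \<and> b \<in> Ext p \<and> letter p a \<noteq> letter p b" using ext x y by simp
qed

lemma lcp_mem_branch_points: "a \<in> A \<Longrightarrow> b \<in> A \<Longrightarrow> a \<noteq> b \<Longrightarrow> lcp a b \<in> Br"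
  unfolding branch_points_def by blast

lemma same_letter_extending:
  assumes c: "c \<in> Ext p" and c': "c' \<in> Ext p" and "letter p c = letter p c'" and "c \<noteq> c'"
  shows "c \<in> Ext (p @ [letter p c])"
proof -
  obtain x r where x: "W c = p @ x # r" "letter p c = x" using c extendingE by blast
  obtain r' where "W c' = p @ x # r'" using c' extendingE \<open>letter p c = letter p c'\<close> x(2) by metis
  have "r \<noteq> []"
  proof
    assume "r = []"
    then have "prefix (W c) (W c')" using x \<open>W c' = p @ x # r'\<close> by simp
    then show False using prefix_free c c' extending_subset \<open>c \<noteq> c'\<close> by blast
  qed
  then show ?thesis using x c extending_subset unfolding extending_def by auto
qed

lemma cycle_extending_shortest_lcp:
  assumes j: "j < n" and vA: "\<And>i. i < n \<Longrightarrow> v i \<in> A" and vne: "v j \<noteq> v (Suc j mod n)"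
    and shortest: "\<And>i. i < n \<Longrightarrow>
      length (lcp (v j) (v (Suc j mod n))) \<le> length (lcp (v i) (v (Suc i mod n)))"
    and i: "i < n"
  shows "v i \<in> Ext (lcp (v j) (v (Suc j mod n)))"
proof -
  let ?t = "lcp (v j) (v (Suc j mod n))"
  have sj: "Suc j mod n < n" using j by simp
  have pref: "prefix ?t (W (v k))" if "k < n" for k
    using prefix_around_cycle[of j n ?t "W \<circ> v"] j that shortest longest_common_prefix_prefix1
    by auto
  show ?thesis
  proof (rule prefix_extendingI[OF vA[OF i] pref[OF i]])
    show "W (v i) \<noteq> ?t"
    proof
      assume "W (v i) = ?t"
      then have "v i = v j" using prefix_free vA i j pref by metis
      then have "prefix (W (v j)) (W (v (Suc j mod n)))"
        using \<open>W (v i) = ?t\<close> longest_common_prefix_prefix2 by metis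
      then show False using prefix_free vA j sj vne by metis
    qed
  qed
qed

lemma level_clique_doubleton_iff:
  assumes "a \<in> A" "b \<in> A" "a \<noteq> b"
  shows "2 \<le> card (level_clique {a, b} p) \<longleftrightarrow> p = lcp a b"
  using lcp_iff_branching[OF assms] by (simp add: two_le_card_image_doubleton_iff)

end

section \<open>Lifting a spanning tree\<close>

locale spanning_tree_lifting = prefix_code A W for A :: "'a set" and W :: "'a \<Rightarrow> 'b list" +
  fixes B :: "'b set" and G :: "'a set multiset" and G' T' :: "'b set multiset"
  assumes finite_B: "finite B"
    and connected_branches: "\<And>p. p \<in> Br \<Longrightarrow> mc_connected (Ext p) (induced (Ext p) G)"
    and G'_letter_cliques: "mc_eq G' (letter_cliques A W G)"
    and G'_on_B: "multi_clique_on B G'"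
    and acyclic_G': "acyclic_coloring G'"
    and spanning: "spanning_tree B G' T'"
begin

lemma T'_edge: "e \<in># T' \<Longrightarrow> e \<subseteq> B \<and> card e = 2"
  and T'_simple: "count T' e \<le> 1"
  and T'_connected: "mc_connected B T'"
  and T'_acyclic: "acyclic_coloring T'"
  and T'_in_G': "e \<in># T' \<Longrightarrow> \<exists>D\<in>#G'. e \<subseteq> D"
  using spanning unfolding spanning_tree_def colored_tree_def by blast+

lemma count_G':
  assumes "2 \<le> card K"
  shows "count G' K = count (letter_cliques A W G) K"
proof -
  have "count (filter_mset (\<lambda>C. 2 \<le> card C) G') K =
        count (filter_mset (\<lambda>C. 2 \<le> card C) (letter_cliques A W G)) K"
    using G'_letter_cliques unfolding mc_eq_def by simp
  then show ?thesis using assms by simp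
qed

lemma mem_letter_cliques:
  "K \<in># letter_cliques A W G \<longleftrightarrow> (\<exists>C\<in>#G. \<exists>p\<in>Br. K = level_clique C p)"
  using finite_branch_points by (auto simp: letter_cliques_def in_image_mset)

lemma level_clique_in_G':
  assumes "C \<in># G" "p \<in> Br" "2 \<le> card (level_clique C p)"
  shows "level_clique C p \<in># G'"
  using count_G'[OF assms(3)] assms(1,2) mem_letter_cliques
  by (metis count_greater_zero_iff)

lemma G'_clique_is_level_clique:
  assumes "D \<in># G'" "2 \<le> card D"
  obtains C p where "C \<in># G" "p \<in> Br" "D = level_clique C p"
  using count_G'[OF assms(2)] assms(1) mem_letter_cliques that
  by (metis count_greater_zero_iff)

text \<open>Otherwise \<open>G'\<close> would contain two colours sharing an edge.\<close>

lemma same_branch_point_of_common_edge: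
  assumes "x \<noteq> y" "x \<in> level_clique C1 p1" "y \<in> level_clique C1 p1"
    "x \<in> level_clique C2 p2" "y \<in> level_clique C2 p2"
    and C: "C1 \<in># G" "C2 \<in># G" and p: "p1 \<in> Br" "p2 \<in> Br"
  shows "p1 = p2"
proof (rule ccontr)
  assume "p1 \<noteq> p2"
  let ?K1 = "level_clique C1 p1" and ?K2 = "level_clique C2 p2"
  have card: "2 \<le> card ?K1" "2 \<le> card ?K2"
    using assms(1-5) finite_level_clique by (blast intro: two_le_card)+
  have K1: "?K1 \<in># G'" and K2: "?K2 \<in># G'"
    using level_clique_in_G' C p card by blast+
  have "?K2 \<in># G' - {#?K1#}"
  proof (cases "?K1 = ?K2")
    case True
    have "2 \<le> count (letter_cliques A W G) ?K1"
      unfolding letter_cliques_def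
      by (rule two_le_count_sum_image_mset[OF C p \<open>p1 \<noteq> p2\<close> finite_branch_points])
        (use True in auto)
    then have "2 \<le> count G' ?K1" using count_G'[OF card(1)] by simp
    then show ?thesis using True by (simp add: in_diff_count)
  next
    case False
    then show ?thesis using K2 by (simp add: in_diff_count)
  qed
  then show False
    using acyclic_coloring_two_common_vertices[OF acyclic_G' K1] assms(1-5) by blast
qed

definition lifts :: "'b set \<Rightarrow> 'a set \<Rightarrow> bool" where
  "lifts e E \<longleftrightarrow> (\<exists>a b. E = {a, b} \<and> a \<in> A \<and> b \<in> A \<and> a \<noteq> b \<and> (\<exists>C\<in>#G. E \<subseteq> C) \<and>
     e = level_clique E (lcp a b))"

definition lift :: "'b set \<Rightarrow> 'a set" where
  "lift e = (SOME E. lifts e E)"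

definition lifted_tree :: "'a set multiset" where
  "lifted_tree = image_mset lift T'"

lemma liftsE:
  assumes "lifts e E"
  obtains a b C where "E = {a, b}" "a \<in> A" "b \<in> A" "a \<noteq> b" "C \<in># G" "E \<subseteq> C"
    "a \<in> Ext (lcp a b)" "b \<in> Ext (lcp a b)" "letter (lcp a b) a \<noteq> letter (lcp a b) b"
    "e = {letter (lcp a b) a, letter (lcp a b) b}"
proof -
  obtain a b C where ab: "E = {a, b}" "a \<in> A" "b \<in> A" "a \<noteq> b" "C \<in># G" "E \<subseteq> C"
    and e: "e = level_clique E (lcp a b)"
    using assms unfolding lifts_def by blast
  moreover have "a \<in> Ext (lcp a b)" "b \<in> Ext (lcp a b)" "letter (lcp a b) a \<noteq> letter (lcp a b) b"
    using lcp_iff_branching[OF ab(2-4)] by blast+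
  moreover have "e = {letter (lcp a b) a, letter (lcp a b) b}"
    using e ab(1) calculation by auto
  ultimately show thesis using that by blast
qed

lemma lifts_lift:
  assumes "e \<in># T'"
  shows "lifts e (lift e)"
proof -
  obtain x y where xy: "e = {x, y}" "x \<noteq> y" using T'_edge[OF assms] card_2_iff by metis
  obtain D where D: "D \<in># G'" "e \<subseteq> D" using T'_in_G'[OF assms] by blast
  have "finite D"
    using D(1) G'_on_B finite_B unfolding multi_clique_on_def by (blast intro: finite_subset)
  then have "2 \<le> card D" using D(2) xy by (intro two_le_card) auto
  then obtain C p where C: "C \<in># G" "p \<in> Br" "D = level_clique C p"
    using G'_clique_is_level_clique D(1) by blast
  obtain a b where a: "a \<in> C \<inter> Ext p" "letter p a = x" and b: "b \<in> C \<inter> Ext p" "letter p b = y"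
    using xy D(2) C(3) by blast
  have ab: "a \<in> A" "b \<in> A" "a \<noteq> b" using a b xy(2) extending_subset by auto
  then have "p = lcp a b" using lcp_iff_branching a b xy(2) by blast
  then have "lifts e {a, b}"
    unfolding lifts_def using ab C(1) a b xy(1) by (intro exI[of _ a] exI[of _ b]) auto
  then show ?thesis unfolding lift_def by (rule someI)
qed

lemma level_cliques_of_lift:
  assumes "lifts e E"
  shows "filter_mset (\<lambda>K. 2 \<le> card K) (image_mset (level_clique E) (mset_set Br)) = {#e#}"
proof -
  obtain a b C where ab: "E = {a, b}" "a \<in> A" "b \<in> A" "a \<noteq> b"
    and ext: "a \<in> Ext (lcp a b)" "b \<in> Ext (lcp a b)"
    and e: "e = {letter (lcp a b) a, letter (lcp a b) b}"
    using assms by (rule liftsE)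
  have "{p \<in> Br. 2 \<le> card (level_clique E p)} = {lcp a b}"
    using level_clique_doubleton_iff[OF ab(2-4)] lcp_mem_branch_points[OF ab(2-4)] ab(1) by auto
  then have "filter_mset (\<lambda>K. 2 \<le> card K) (image_mset (level_clique E) (mset_set Br)) =
      {#level_clique E (lcp a b)#}"
    using finite_branch_points by (simp flip: image_mset_filter_mset_swap)
  also have "level_clique E (lcp a b) = e" using ab(1) ext e by auto
  finally show ?thesis .
qed

lemma inj_on_lift: "inj_on lift (set_mset T')"
proof (rule inj_onI)
  fix e1 e2 assume "e1 \<in># T'" "e2 \<in># T'" "lift e1 = lift e2"
  then have "{#e1#} = {#e2#}" using level_cliques_of_lift lifts_lift by metis
  then show "e1 = e2" by simp
qed

lemma lifted_tree_eq_mset_set: "lifted_tree = mset_set (lift ` set_mset T')"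
  unfolding lifted_tree_def
  using image_mset_mset_set[OF inj_on_lift] mset_set_set_mset_eq[OF T'_simple] by metis

lemma lifted_tree_simple: "count lifted_tree E \<le> 1"
  unfolding lifted_tree_eq_mset_set by (simp add: count_mset_set')

lemma lifted_tree_edge:
  assumes "E \<in># lifted_tree"
  shows "E \<subseteq> A" "card E = 2" "\<exists>C\<in>#G. E \<subseteq> C"
proof -
  obtain e where "e \<in># T'" "E = lift e" using assms unfolding lifted_tree_def by auto
  then have "lifts e E" using lifts_lift by simp
  then show "E \<subseteq> A" "card E = 2" "\<exists>C\<in>#G. E \<subseteq> C" by (auto elim!: liftsE)
qed

lemma letter_cliques_lifted_tree: "mc_eq T' (letter_cliques A W lifted_tree)"
proof -
  have "filter_mset (\<lambda>K. 2 \<le> card K) (letter_cliques A W lifted_tree) =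
      (\<Sum>e\<in>#T'. filter_mset (\<lambda>K. 2 \<le> card K) (image_mset (level_clique (lift e)) (mset_set Br)))"
    unfolding letter_cliques_def lifted_tree_def
    by (simp add: filter_mset_sum_mset_image multiset.map_comp comp_def)
  also have "\<dots> = (\<Sum>e\<in>#T'. {#e#})"
    using level_cliques_of_lift lifts_lift by (intro arg_cong[of _ _ sum_mset] image_mset_cong) blast
  also have "\<dots> = T'" by (induction T') auto
  also have "\<dots> = filter_mset (\<lambda>K. 2 \<le> card K) T'"
    using T'_edge by (subst eq_commute) (simp add: filter_mset_eq_conv)
  finally show ?thesis unfolding mc_eq_def by simp
qed

definition level_edges :: "'b list \<Rightarrow> 'b set multiset" where
  "level_edges p = filter_mset (\<lambda>e. \<exists>C\<in>#G. e \<subseteq> level_clique C p) T'"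

lemma letters_joined_at_level:
  assumes p: "p \<in> Br" and cd: "c \<in> Ext p" "d \<in> Ext p" and C: "C \<in># G" "c \<in> C" "d \<in> C"
  shows "(letter p c, letter p d) \<in> (adj (level_edges p))\<^sup>*"
proof (cases "letter p c = letter p d")
  case False
  let ?K = "level_clique C p"
  have xK: "letter p c \<in> ?K" "letter p d \<in> ?K" using cd C by auto
  have K: "?K \<in># G'"
    by (rule level_clique_in_G'[OF C(1) p two_le_card[OF finite_level_clique xK False]])
  have "?K \<subseteq> B" using G'_on_B K unfolding multi_clique_on_def by (rule bspec)
  then have "letter p c \<in> B" "letter p d \<in> B" using xK by auto
  then have "(letter p c, letter p d) \<in> (adj T' \<inter> B \<times> B)\<^sup>*"
    using T'_connected unfolding mc_connected_iff_adj by simp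
  then have "(letter p c, letter p d) \<in> (adj T')\<^sup>*" using rtrancl_mono[of _ "adj T'"] by blast
  then have "(letter p c, letter p d) \<in> (adj (filter_mset (\<lambda>e. e \<subseteq> ?K) T'))\<^sup>*"
    using T'_edge T'_in_G' by (intro acyclic_coloring_path_within_clique[OF acyclic_G' _ _ K xK]) auto
  moreover have "adj (filter_mset (\<lambda>e. e \<subseteq> ?K) T') \<subseteq> adj (level_edges p)"
    unfolding level_edges_def using C(1) by (intro adj_mono) auto
  ultimately show ?thesis using rtrancl_mono by blast
qed simp

lemma lift_at_level:
  assumes e: "e \<in># T'" "e \<subseteq> level_clique C p" and C: "C \<in># G" and p: "p \<in> Br"
  obtains a b where "lift e = {a, b}" "a \<in> Ext p" "b \<in> Ext p" "e = {letter p a, letter p b}"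
proof -
  obtain a b C0 where ab: "lift e = {a, b}" "a \<in> A" "b \<in> A" "a \<noteq> b" "C0 \<in># G" "lift e \<subseteq> C0"
    and ext: "a \<in> Ext (lcp a b)" "b \<in> Ext (lcp a b)"
    and ne: "letter (lcp a b) a \<noteq> letter (lcp a b) b"
    and e_eq: "e = {letter (lcp a b) a, letter (lcp a b) b}"
    using lifts_lift[OF e(1)] by (rule liftsE)
  have "lcp a b = p"
  proof (rule same_branch_point_of_common_edge[OF ne])
    show "letter (lcp a b) a \<in> level_clique C0 (lcp a b)" "letter (lcp a b) b \<in> level_clique C0 (lcp a b)"
      using ab(1,6) ext by auto
    show "letter (lcp a b) a \<in> level_clique C p" "letter (lcp a b) b \<in> level_clique C p"
      using e(2) e_eq by auto
  qed (use ab C p lcp_mem_branch_points in auto)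
  then show thesis using that ab(1) ext e_eq by blast
qed

lemma lifted_edge_between_letters:
  assumes p: "p \<in> Br" and "(X, Y) \<in> adj (level_edges p)" "X \<noteq> Y"
  obtains a b where "a \<in> Ext p" "b \<in> Ext p" "letter p a = X" "letter p b = Y"
    "(a, b) \<in> adj lifted_tree"
proof -
  obtain e C where e: "e \<in># T'" "C \<in># G" "e \<subseteq> level_clique C p" "X \<in> e" "Y \<in> e"
    using assms(2) unfolding adj_def level_edges_def by auto
  obtain a b where ab: "lift e = {a, b}" "a \<in> Ext p" "b \<in> Ext p" "e = {letter p a, letter p b}"
    using lift_at_level[OF e(1,3,2) p] by blast
  have "lift e \<in># lifted_tree" using e(1) unfolding lifted_tree_def by simp
  then have "(a, b) \<in> adj lifted_tree" "(b, a) \<in> adj lifted_tree"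
    using ab(1) unfolding adj_def by auto
  moreover have "letter p a = X \<and> letter p b = Y \<or> letter p b = X \<and> letter p a = Y"
    using ab(4) e(4,5) \<open>X \<noteq> Y\<close> by auto
  ultimately show thesis using that ab(2,3) by blast
qed

lemma letter_path_lifts:
  assumes p: "p \<in> Br"
    and same_letter: "\<And>c d. c \<in> Ext p \<Longrightarrow> d \<in> Ext p \<Longrightarrow> letter p c = letter p d \<Longrightarrow>
      (c, d) \<in> (adj lifted_tree \<inter> Ext p \<times> Ext p)\<^sup>*"
    and path: "(X, Y) \<in> (adj (level_edges p))\<^sup>*"
    and c: "c \<in> Ext p" "letter p c = X" and d: "d \<in> Ext p" "letter p d = Y"
  shows "(c, d) \<in> (adj lifted_tree \<inter> Ext p \<times> Ext p)\<^sup>*"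
  using path d
proof (induction arbitrary: d rule: rtrancl_induct)
  case base
  then show ?case using same_letter c by simp
next
  case (step Y Z)
  let ?R = "adj lifted_tree \<inter> Ext p \<times> Ext p"
  show ?case
  proof (cases "Y = Z")
    case True
    then show ?thesis using step by blast
  next
    case False
    then obtain a b where ab: "a \<in> Ext p" "b \<in> Ext p" "letter p a = Y" "letter p b = Z"
      "(a, b) \<in> adj lifted_tree"
      using lifted_edge_between_letters[OF p step(2)] by blast
    have "(c, a) \<in> ?R\<^sup>*" using step.IH ab by blast
    moreover have "(a, b) \<in> ?R" using ab by blast
    moreover have "(b, d) \<in> ?R\<^sup>*" using same_letter ab step.prems by simp
    ultimately show ?thesis by (meson rtrancl_into_rtrancl rtrancl_trans)
  qed
qed

lemma connected_across_letters:
  assumes p: "p \<in> Br"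
    and same_letter: "\<And>c d. c \<in> Ext p \<Longrightarrow> d \<in> Ext p \<Longrightarrow> letter p c = letter p d \<Longrightarrow>
      (c, d) \<in> (adj lifted_tree \<inter> Ext p \<times> Ext p)\<^sup>*"
    and ab: "a \<in> Ext p" "b \<in> Ext p"
  shows "(a, b) \<in> (adj lifted_tree \<inter> Ext p \<times> Ext p)\<^sup>*"
proof -
  let ?R = "adj lifted_tree \<inter> Ext p \<times> Ext p"
  have "adj (induced (Ext p) G) \<inter> Ext p \<times> Ext p \<subseteq> ?R\<^sup>*"
  proof clarify
    fix y z assume yz: "(y, z) \<in> adj (induced (Ext p) G)" "y \<in> Ext p" "z \<in> Ext p"
    then obtain C where "C \<in># G" "y \<in> C" "z \<in> C" unfolding adj_def induced_def by auto
    then show "(y, z) \<in> ?R\<^sup>*"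
      using letter_path_lifts[OF p same_letter letters_joined_at_level[OF p yz(2,3)]] yz(2,3)
      by blast
  qed
  then have "(adj (induced (Ext p) G) \<inter> Ext p \<times> Ext p)\<^sup>* \<subseteq> ?R\<^sup>*"
    by (rule rtrancl_subset_rtrancl)
  moreover have "(a, b) \<in> (adj (induced (Ext p) G) \<inter> Ext p \<times> Ext p)\<^sup>*"
    using connected_branches[OF p] ab unfolding mc_connected_iff_adj by blast
  ultimately show ?thesis by blast
qed

text \<open>Induction on the depth of \<open>p\<close>: letters with the same next letter after \<open>p\<close> both extend
  \<open>p\<close> one letter further (by prefix-freeness), and two letters with different next letters
  make \<open>p\<close> a branch point.\<close>

lemma lifted_tree_connected_on_extending:
  assumes "a \<in> Ext p" "b \<in> Ext p"
  shows "(a, b) \<in> (adj lifted_tree \<inter> Ext p \<times> Ext p)\<^sup>*"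
  using assms
proof (induction "Max (length ` W ` A) - length p" arbitrary: p a b rule: less_induct)
  case less
  have same_letter: "(c, d) \<in> (adj lifted_tree \<inter> Ext p \<times> Ext p)\<^sup>*"
    if cd: "c \<in> Ext p" "d \<in> Ext p" "letter p c = letter p d" for c d
  proof (cases "c = d")
    case False
    let ?q = "p @ [letter p c]"
    have "c \<in> Ext ?q" "d \<in> Ext ?q"
      using same_letter_extending[OF cd False] same_letter_extending[OF cd(2,1) cd(3)[symmetric]]
        False cd(3) by auto
    moreover have "length p < Max (length ` W ` A)"
      using length_lt_of_extending[OF cd(1)] extending_subset cd(1) finite_A
      by (meson Max_ge finite_imageI image_eqI less_le_trans subsetD)
    then have "Max (length ` W ` A) - length ?q < Max (length ` W ` A) - length p" by simp
    ultimately have "(c, d) \<in> (adj lifted_tree \<inter> Ext ?q \<times> Ext ?q)\<^sup>*" using less by blast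
    moreover have "adj lifted_tree \<inter> Ext ?q \<times> Ext ?q \<subseteq> adj lifted_tree \<inter> Ext p \<times> Ext p"
      using extending_append_subset by blast
    ultimately show ?thesis using rtrancl_mono by blast
  qed simp
  show ?case
  proof (cases "letter p a = letter p b")
    case True
    then show ?thesis using same_letter less.prems by blast
  next
    case False
    have ab: "a \<in> A" "b \<in> A" "a \<noteq> b" using less.prems extending_subset False by auto
    then have "p = lcp a b" using lcp_iff_branching[OF ab] less.prems False by blast
    then have "p \<in> Br" using lcp_mem_branch_points[OF ab] by simp
    then show ?thesis using connected_across_letters same_letter less.prems by blast
  qed
qed

lemma lifted_tree_connected: "mc_connected A lifted_tree"
  using lifted_tree_connected_on_extending[of _ "[]"]
  unfolding mc_connected_iff_adj extending_Nil by blast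

lemma lifted_tree_connected_branches: "mc_connected (Ext p) (induced (Ext p) lifted_tree)"
  using lifted_tree_connected_on_extending unfolding mc_connected_iff_adj adj_induced by blast

lemma lift_letters:
  assumes e: "e \<in># T'" and ab: "lift e = {a, b}" "a \<in> Ext t" "b \<in> Ext t"
    and ne: "letter t a \<noteq> letter t b"
  shows "e = {letter t a, letter t b}"
proof -
  obtain a' b' C where ab': "lift e = {a', b'}"
    and e_eq: "e = {letter (lcp a' b') a', letter (lcp a' b') b'}"
    using lifts_lift[OF e] by (rule liftsE)
  have "a \<in> A" "b \<in> A" "a \<noteq> b" using ab ne extending_subset by auto
  then have "t = lcp a b" using lcp_iff_branching ab ne by blast
  moreover have "a' = a \<and> b' = b \<or> a' = b \<and> b' = a" using ab(1) ab' by (auto simp: doubleton_eq_iff)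
  moreover have "lcp b a = lcp a b" by (rule longest_common_prefix_commute)
  ultimately show ?thesis using e_eq by auto
qed

lemma cycle_letters_joined_avoiding:
  assumes n: "3 \<le> n" and inj: "inj_on v {..<n}" and j: "j < n"
    and ee: "\<And>i. i < n \<Longrightarrow> ee i \<in># T'" "\<And>i. i < n \<Longrightarrow> lift (ee i) = {v i, v (Suc i mod n)}"
    and ext: "\<And>i. i < n \<Longrightarrow> v i \<in> Ext t"
  shows "(letter t (v (Suc j mod n)), letter t (v j)) \<in> (adj (filter_mset (\<lambda>f. f \<noteq> ee j) T'))\<^sup>*"
proof (rule rtrancl_around_cycle[OF j, where y = "\<lambda>i. letter t (v i)"])
  fix i assume i: "i < n" "i \<noteq> j"
  have si: "Suc i mod n < n" using i by simp
  show "(letter t (v i), letter t (v (Suc i mod n))) \<in> (adj (filter_mset (\<lambda>f. f \<noteq> ee j) T'))\<^sup>*"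
  proof (cases "letter t (v i) = letter t (v (Suc i mod n))")
    case False
    have "ee i = {letter t (v i), letter t (v (Suc i mod n))}"
      by (rule lift_letters[OF ee(1,2)[OF i(1)] ext[OF i(1)] ext[OF si] False])
    moreover have "ee i \<noteq> ee j"
      using ee(2)[OF i(1)] ee(2)[OF j] cycle_edges_distinct[OF n inj i(1) j] i(2) by auto
    ultimately have "(letter t (v i), letter t (v (Suc i mod n))) \<in>
        adj (filter_mset (\<lambda>f. f \<noteq> ee j) T')"
      using ee(1)[OF i(1)] unfolding adj_def by auto
    then show ?thesis by blast
  qed simp
qed

text \<open>On a cycle of the lifted tree, let \<open>t\<close> be the shortest of the longest common prefixes of
  consecutive vertices. All vertices extend \<open>t\<close>, the edge realising \<open>t\<close> is the lift of a
  \<open>T'\<close>-edge joining two different letters after \<open>t\<close>, and the remaining edges of the cycle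
  join these two letters in \<open>T'\<close> without using that edge.\<close>

lemma lifted_tree_no_cycle:
  assumes n: "3 \<le> n" and inj: "inj_on v {..<n}"
    and edges: "\<And>i. i < n \<Longrightarrow> {v i, v (Suc i mod n)} \<in># lifted_tree"
  shows False
proof -
  have vA: "v i \<in> A" if "i < n" for i using lifted_tree_edge(1)[OF edges[OF that]] by simp
  have vne: "v i \<noteq> v (Suc i mod n)" if "i < n" for i
    using cycle_consecutive_neq[of n v i] n inj that by simp
  have "\<exists>e. e \<in># T' \<and> lift e = {v i, v (Suc i mod n)}" if "i < n" for i
    using edges[OF that] unfolding lifted_tree_def by auto
  then obtain ee where ee: "\<And>i. i < n \<Longrightarrow> ee i \<in># T'"
    "\<And>i. i < n \<Longrightarrow> lift (ee i) = {v i, v (Suc i mod n)}"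
    by metis
  define q where "q i = lcp (v i) (v (Suc i mod n))" for i
  obtain j where j: "j < n" "\<And>i. i < n \<Longrightarrow> length (q j) \<le> length (q i)"
    using ex_has_least_nat[of "\<lambda>i. i < n" 0 "\<lambda>i. length (q i)"] n by auto
  define t where "t = q j"
  have sj: "Suc j mod n < n" using j by simp
  have ext: "v i \<in> Ext t" if "i < n" for i
    using cycle_extending_shortest_lcp[OF j(1) vA vne[OF j(1)] j(2)[unfolded q_def] that]
    unfolding t_def q_def .
  have ne: "letter t (v j) \<noteq> letter t (v (Suc j mod n))"
    using lcp_iff_branching[OF vA[OF j(1)] vA[OF sj] vne[OF j(1)], of t]
    unfolding t_def q_def by blast
  have ee_j: "ee j = {letter t (v (Suc j mod n)), letter t (v j)}"
    using lift_letters[OF ee(1,2)[OF j(1)] ext[OF j(1)] ext[OF sj] ne] by auto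
  have "(letter t (v (Suc j mod n)), letter t (v j)) \<in> (adj (filter_mset (\<lambda>f. f \<noteq> ee j) T'))\<^sup>*"
    by (rule cycle_letters_joined_avoiding[OF n inj j(1) ee ext])
  moreover have "(letter t (v (Suc j mod n)), letter t (v j)) \<notin>
      (adj (filter_mset (\<lambda>f. f \<noteq> ee j) T'))\<^sup>*"
    unfolding ee_j
    by (rule acyclic_coloring_edge_is_bridge[OF T'_acyclic]) (use T'_edge ee(1)[OF j(1)] ee_j ne in auto)
  ultimately show False by contradiction
qed

lemma lifted_tree_acyclic: "acyclic_coloring lifted_tree"
  using lifted_tree_edge(2) lifted_tree_simple lifted_tree_no_cycle
  by (rule acyclic_coloring_if_no_cycles)

lemma lifted_tree_spanning: "spanning_tree A G lifted_tree"
  using lifted_tree_edge lifted_tree_simple lifted_tree_connected lifted_tree_acyclic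
  unfolding spanning_tree_def colored_tree_def by blast

lemma lifted_tree_valid: "valid_triplet A B W T' lifted_tree"
  using lifted_tree_edge(1) lifted_tree_acyclic lifted_tree_connected
    lifted_tree_connected_branches letter_cliques_lifted_tree T'_edge T'_acyclic T'_connected
  unfolding valid_triplet_def multi_clique_on_def by blast

end

theorem valid_triplet_spanning_tree:
  assumes "prefix_code A W" "finite B" "valid_triplet A B W G' G" "spanning_tree B G' T'"
  shows "\<exists>T. spanning_tree A G T \<and> valid_triplet A B W T' T"
proof -
  interpret spanning_tree_lifting A W B G G' T'
    using assms by unfold_locales (auto simp: valid_triplet_def prefix_code_def)
  show ?thesis using lifted_tree_spanning lifted_tree_valid by blast
qed

section \<open>Return morphisms\<close>

lemma return_morphism_inj:
  assumes "return_morphism A B \<sigma> w" "a \<in> A" "b \<in> A" "\<sigma> a = \<sigma> b"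
  shows "a = b"
proof -
  have "morph \<sigma> [a] = morph \<sigma> [b]" using assms(4) by (simp add: morph_def)
  then have "[a] = [b]"
    using assms(1-3) unfolding return_morphism_def by (auto dest: inj_onD)
  then show ?thesis by simp
qed

lemma return_morphism_occurrence:
  assumes "return_morphism A B \<sigma> w" "a \<in> A" "\<sigma> a @ w = p @ w @ r"
  shows "p = [] \<or> length p = length (\<sigma> a)"
proof -
  have "length p \<in> occurrences (\<sigma> a @ w) w" using assms(3) unfolding occurrences_def by blast
  then show ?thesis using assms(1,2) unfolding return_morphism_def by auto
qed

lemma return_morphism_nonempty: "return_morphism A B \<sigma> w \<Longrightarrow> a \<in> A \<Longrightarrow> \<sigma> a \<noteq> []"
  unfolding return_morphism_def by blast

lemma return_morphism_suffix_free:
  assumes rm: "return_morphism A B \<sigma> w" and ab: "a \<in> A" "b \<in> A"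
    and "suffix (\<sigma> a) (\<sigma> b)"
  shows "a = b"
proof -
  obtain u where u: "\<sigma> b = u @ \<sigma> a" using assms(4) unfolding suffix_def by blast
  have "0 \<in> occurrences (\<sigma> a @ w) w" using rm ab(1) unfolding return_morphism_def by blast
  then obtain r where "\<sigma> a @ w = w @ r" unfolding occurrences_def by auto
  then have "\<sigma> b @ w = u @ w @ r" using u by simp
  then have "u = [] \<or> length u = length (\<sigma> b)"
    by (rule return_morphism_occurrence[OF rm ab(2)])
  then have "u = []" using u return_morphism_nonempty[OF rm ab(1)] by auto
  then show ?thesis using u return_morphism_inj[OF rm ab] by simp
qed

lemma return_morphism_prefix_free:
  assumes rm: "return_morphism A B \<sigma> w" and ab: "a \<in> A" "b \<in> A"
    and "prefix (\<sigma> a @ w) (\<sigma> b @ w)"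
  shows "a = b"
proof -
  obtain r where "\<sigma> b @ w = \<sigma> a @ w @ r" using assms(4) unfolding prefix_def by auto
  moreover from this have "length (\<sigma> a) = length (\<sigma> b)"
    using return_morphism_occurrence[OF rm ab(2)] return_morphism_nonempty[OF rm ab(1)] by auto
  ultimately have "\<sigma> a = \<sigma> b" by (metis append_eq_append_conv)
  then show ?thesis using return_morphism_inj[OF rm ab] by simp
qed

lemma prefix_code_rev:
  "finite A \<Longrightarrow> return_morphism A B \<sigma> w \<Longrightarrow> prefix_code A (\<lambda>a. rev (\<sigma> a))"
  unfolding prefix_code_def
  by (auto simp: return_morphism_nonempty return_morphism_suffix_free suffix_to_prefix)

lemma prefix_code_append:
  "finite A \<Longrightarrow> return_morphism A B \<sigma> w \<Longrightarrow> prefix_code A (\<lambda>a. \<sigma> a @ w)"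
  unfolding prefix_code_def
  by (auto simp: return_morphism_nonempty intro: return_morphism_prefix_free)

lemma left_valid_iff_valid_triplet:
  "left_valid A B \<sigma> G' G \<longleftrightarrow> valid_triplet A B (\<lambda>a. rev (\<sigma> a)) G' G"
proof -
  let ?W = "\<lambda>a. rev (\<sigma> a)"
  have AL: "AL A \<sigma> s = extending A ?W (rev s)" for s
    unfolding AL_def extending_def by (metis (no_types, opaque_lifting) rev_append rev_is_Nil_conv
        rev_rev_ident)
  have TL: "TL A \<sigma> = rev ` branch_points A ?W"
    unfolding TL_def branch_points_def longest_common_suffix_def by blast
  have phiL: "phiL \<sigma> (rev p) a = next_letter ?W p a" if "a \<in> extending A ?W p" for a p
  proof -
    have "length p < length (\<sigma> a)"
      using that unfolding extending_def by (auto dest!: arg_cong[of _ _ length])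
    then show ?thesis unfolding phiL_def next_letter_def by (simp add: rev_nth)
  qed
  have "image_mset (\<lambda>s. phiL \<sigma> s ` (C \<inter> AL A \<sigma> s)) (mset_set (TL A \<sigma>)) =
      image_mset (\<lambda>p. next_letter ?W p ` (C \<inter> extending A ?W p)) (mset_set (branch_points A ?W))"
    for C
  proof -
    have "mset_set (TL A \<sigma>) = image_mset rev (mset_set (branch_points A ?W))"
      unfolding TL by (rule image_mset_mset_set[symmetric]) (simp add: inj_on_def)
    then show ?thesis
      by (simp add: multiset.map_comp comp_def AL) (auto intro!: image_mset_cong image_cong phiL)
  qed
  then have "sigmaL A \<sigma> G = letter_cliques A ?W G"
    unfolding sigmaL_def letter_cliques_def by simp
  moreover have "(\<forall>s\<in>TL A \<sigma>. mc_connected (AL A \<sigma> s) (induced (AL A \<sigma> s) G)) \<longleftrightarrow>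
      (\<forall>p\<in>branch_points A ?W. mc_connected (extending A ?W p) (induced (extending A ?W p) G))"
    unfolding TL AL by simp
  ultimately show ?thesis unfolding left_valid_def valid_triplet_def by simp
qed

lemma right_valid_iff_valid_triplet:
  "right_valid A B \<sigma> w G' G \<longleftrightarrow> valid_triplet A B (\<lambda>a. \<sigma> a @ w) G' G"
proof -
  have "AR A \<sigma> w = extending A (\<lambda>a. \<sigma> a @ w)"
    unfolding AR_def extending_def by (rule ext) simp
  moreover have "phiR \<sigma> w = next_letter (\<lambda>a. \<sigma> a @ w)"
    unfolding phiR_def next_letter_def by (intro ext) simp
  moreover have "TR A \<sigma> w = branch_points A (\<lambda>a. \<sigma> a @ w)"
    unfolding TR_def branch_points_def by simp
  ultimately show ?thesis
    unfolding right_valid_def valid_triplet_def sigmaR_def letter_cliques_def by simp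
qed

theorem mainTheorem11:
  fixes A :: "'a set" and B :: "'b set" and \<sigma> :: "'a \<Rightarrow> 'b list" and w :: "'b list"
    and G :: "'a set multiset" and G' :: "'b set multiset"
  assumes "finite A" and "finite B"
    and "return_morphism A B \<sigma> w"
  shows "(left_valid A B \<sigma> G' G \<longrightarrow>
            (\<forall>T'. spanning_tree B G' T' \<longrightarrow>
               (\<exists>T. spanning_tree A G T \<and> left_valid A B \<sigma> T' T))) \<and>
         (right_valid A B \<sigma> w G' G \<longrightarrow>
            (\<forall>T'. spanning_tree B G' T' \<longrightarrow>
               (\<exists>T. spanning_tree A G T \<and> right_valid A B \<sigma> w T' T)))"
  using valid_triplet_spanning_tree[OF prefix_code_rev[OF assms(1,3)] assms(2)]
    valid_triplet_spanning_tree[OF prefix_code_append[OF assms(1,3)] assms(2)]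
  unfolding left_valid_iff_valid_triplet right_valid_iff_valid_triplet by blast

end
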